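(* Consider optimization problem (P2) below, under the standing assumptions. Then every optimal solution $(\bar P_1^*,\bm u_1^*,\bar P_2^*,\bm u_2^* )$ of (P2) satisfies the incumbent rate constraint with equality: $$\mathbb{E}\big[\tilde R_1(\bar P_1^*,\bm u_1^*,\bar P_2^*,\bm u_2^* )\big]=\tau_1 .$$
   Context: Setting: two transmitters TX 1 (with $M_1$ antennas) and TX 2 (with $M_2$ antennas), and two single-antenna receivers RX 1, RX 2. For $i,j\in\{1,2\}$ the channel from TX $j$ to RX $i$ is $\bm h_{i,j}\sim\mathcal{CN}(\bm 0_{M_j},\mathbf R_{i,j})$, the four channel vectors being mutually independent, and each covariance $\mathbf R_{i,j}$ is Hermitian positive definite. For $i\in\{1,2\}$, $\bar i$ denotes the other index. The noise variance is $N_0>0$, the power budgets are $P_1^{\max}>0$, $P_2^{\max}>0$, and $\tau_1>0$ satisfies the feasibility condition $\mathbb{E}\big[\log_2\big(1+P_1^{\max}\|\bm h_{1,1}\|^2/N_0\big)\big]\ge\tau_1$. Problem (P2): the optimization variables are constants $\bar P_1\in[0,P_1^{\max}]$, $\bar P_2\in[0,P_2^{\max}]$ and beamformers $\bm u_1=\bm u_1(\bm h_{1,1})\in\mathbb C^{M_1}$, $\bm u_2=\bm u_2(\bm h_{2,2})\in\mathbb C^{M_2}$, where $\bm u_i$ is a measurable function of $\bm h_{i,i}$ only, with $\|\bm u_i\|=1$ almost surely. For $i\in\{1,2\}$ define $$\mathbb{E}\big[\tilde R_i(\bar P_1,\bm u_1,\bar P_2,\bm u_2)\big]=\mathbb{E}\left[\log_2\left(1+\frac{\bar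 P_i\,|\bm h_{i,i}^{H}\bm u_i|^2}{N_0+\bar P_{\bar i}\,\bm u_{\bar i}^{H}\mathbf R_{i,\bar i}\bm u_{\bar i}}\right)\right],$$ the expectation being over $\bm h_{1,1},\bm h_{2,2}$. Problem (P2) is: maximize $\mathbb{E}[\tilde R_2]$ subject to $\mathbb{E}[\tilde R_1]\ge\tau_1$, $0\le\bar P_1\le P_1^{\max}$, $0\le\bar P_2\le P_2^{\max}$, $\|\bm u_1\|=\|\bm u_2\|=1$. *)

theory Defs
  imports "HOL-Analysis.Analysis" "HOL-Probability.Probability"
begin

definition herm :: "complex^'m \<Rightarrow> complex^'m \<Rightarrow> complex" where
  "herm x y = (\<Sum>i\<in>UNIV. cnj (x$i) * y$i)"

definition qform :: "complex^'m^'m \<Rightarrow> complex^'m \<Rightarrow> complex" where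
  "qform R x = herm x (R *v x)"

definition hermitian :: "complex^'m^'m \<Rightarrow> bool" where
  "hermitian R \<longleftrightarrow> (\<forall>i j. R$i$j = cnj (R$j$i))"

definition herm_pos_def :: "complex^'m^'m \<Rightarrow> bool" where
  "herm_pos_def R \<longleftrightarrow> hermitian R \<and>
     (\<forall>x. x \<noteq> 0 \<longrightarrow> Im (qform R x) = 0 \<and> Re (qform R x) > 0)"

text \<open>Circularly-symmetric complex Gaussian CN(0,R) on C^M (identified with R^(2M) with
  Lebesgue measure), given by its density  exp(-h^H R^-1 h) / (pi^M det R).\<close>
definition CN :: "complex^'m^'m \<Rightarrow> (complex^'m) measure" where
  "CN R = density lborel
     (\<lambda>h. ennreal (exp (- Re (qform (matrix_inv R) h)) / (pi ^ CARD('m) * Re (det R))))"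

definition rate :: "real \<Rightarrow> real \<Rightarrow> complex^'n \<Rightarrow> complex^'n \<Rightarrow> real \<Rightarrow> complex^'k^'k \<Rightarrow> complex^'k \<Rightarrow> real" where
  "rate N0 P h u Pbar Rc ubar =
     log 2 (1 + P * (cmod (herm h u))\<^sup>2 / (N0 + Pbar * Re (qform Rc ubar)))"

definition ER1 :: "real \<Rightarrow> complex^'m1^'m1 \<Rightarrow> complex^'m2^'m2 \<Rightarrow> complex^'m2^'m2
    \<Rightarrow> real \<Rightarrow> (complex^'m1 \<Rightarrow> complex^'m1) \<Rightarrow> real \<Rightarrow> (complex^'m2 \<Rightarrow> complex^'m2) \<Rightarrow> ennreal" where
  "ER1 N0 R11 R22 R12 P1 u1 P2 u2 =
     (\<integral>\<^sup>+ hh. ennreal (rate N0 P1 (fst hh) (u1 (fst hh)) P2 R12 (u2 (snd hh)))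
        \<partial>(CN R11 \<Otimes>\<^sub>M CN R22))"

definition ER2 :: "real \<Rightarrow> complex^'m1^'m1 \<Rightarrow> complex^'m2^'m2 \<Rightarrow> complex^'m1^'m1
    \<Rightarrow> real \<Rightarrow> (complex^'m1 \<Rightarrow> complex^'m1) \<Rightarrow> real \<Rightarrow> (complex^'m2 \<Rightarrow> complex^'m2) \<Rightarrow> ennreal" where
  "ER2 N0 R11 R22 R21 P1 u1 P2 u2 =
     (\<integral>\<^sup>+ hh. ennreal (rate N0 P2 (snd hh) (u2 (snd hh)) P1 R21 (u1 (fst hh)))
        \<partial>(CN R11 \<Otimes>\<^sub>M CN R22))"

definition feasible_P2 where
  "feasible_P2 N0 R11 R22 R12 P1max P2max \<tau>1 P1 u1 P2 u2 \<longleftrightarrow>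
     0 \<le> P1 \<and> P1 \<le> P1max \<and> 0 \<le> P2 \<and> P2 \<le> P2max \<and>
     u1 \<in> borel_measurable borel \<and> u2 \<in> borel_measurable borel \<and>
     (AE h in CN R11. norm (u1 h) = 1) \<and> (AE h in CN R22. norm (u2 h) = 1) \<and>
     ER1 N0 R11 R22 R12 P1 u1 P2 u2 \<ge> ennreal \<tau>1"

definition optimal_P2 where
  "optimal_P2 N0 R11 R22 R12 R21 P1max P2max \<tau>1 P1 u1 P2 u2 \<longleftrightarrow>
     feasible_P2 N0 R11 R22 R12 P1max P2max \<tau>1 P1 u1 P2 u2 \<and>
     (\<forall>P1' u1' P2' u2'. feasible_P2 N0 R11 R22 R12 P1max P2max \<tau>1 P1' u1' P2' u2' \<longrightarrow>
        ER2 N0 R11 R22 R21 P1' u1' P2' u2' \<le> ER2 N0 R11 R22 R21 P1 u1 P2 u2)"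

end

theory Submission
  imports Defs
begin

text \<open>Suppose an optimum left the incumbent constraint slack, \<open>E[R\<^sub>1] > \<tau>\<^sub>1\<close>.
  If \<open>E[R\<^sub>2] > 0\<close>, lowering \<open>P\<^sub>1\<close> slightly keeps \<open>E[R\<^sub>1] > \<tau>\<^sub>1\<close> (monotone convergence)
  and strictly lowers the interference at RX 2; since \<open>E[R\<^sub>2]\<close> is finite (the rate grows
  at most quadratically in \<open>\<parallel>h\<^sub>2\<^sub>2\<parallel>\<close>, whose Gaussian moments are finite), \<open>E[R\<^sub>2]\<close> strictly
  increases. If \<open>E[R\<^sub>2] = 0\<close>, TX 2 switches to the matched filter \<open>h\<^sub>2\<^sub>2/\<parallel>h\<^sub>2\<^sub>2\<parallel>\<close> with a power
  so small that \<open>E[R\<^sub>1] > \<tau>\<^sub>1\<close> persists, which makes \<open>E[R\<^sub>2]\<close> positive. Either way the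
  point was not optimal.\<close>

section \<open>Gaussian integrals\<close>

lemma nn_integral_exp_neg_square_finite:
  fixes \<mu> :: real
  assumes "\<mu> > 0"
  shows "(\<integral>\<^sup>+t. ennreal (exp (- \<mu> * t\<^sup>2)) \<partial>lborel) < \<infinity>"
proof -
  define \<sigma> where "\<sigma> = sqrt (1 / (2 * \<mu>))"
  have \<sigma>: "\<sigma> > 0" and \<sigma>_sq: "2 * \<sigma>\<^sup>2 = 1 / \<mu>"
    using assms by (simp_all add: \<sigma>_def)
  define c where "c = sqrt (2 * pi * \<sigma>\<^sup>2)"
  have c: "c > 0" using \<sigma> by (simp add: c_def)
  have "exp (- \<mu> * t\<^sup>2) = c * normal_density 0 \<sigma> t" for t
    using c \<sigma> \<sigma>_sq assms by (simp add: normal_density_def c_def field_simps)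
  then have "(\<integral>\<^sup>+t. ennreal (exp (- \<mu> * t\<^sup>2)) \<partial>lborel)
      = c * (\<integral>\<^sup>+t. ennreal (normal_density 0 \<sigma> t) \<partial>lborel)"
    using c by (simp add: ennreal_mult nn_integral_cmult)
  also have "(\<integral>\<^sup>+t. ennreal (normal_density 0 \<sigma> t) \<partial>lborel) = 1"
  proof -
    interpret prob_space "density lborel (normal_density 0 \<sigma>)"
      using \<sigma> by (rule prob_space_normal_density)
    show ?thesis using emeasure_space_1 by (simp add: emeasure_density)
  qed
  finally show ?thesis by simp
qed

lemma nn_integral_exp_neg_norm_square_finite:
  fixes \<mu> :: real
  assumes "\<mu> > 0"
  shows "(\<integral>\<^sup>+x. ennreal (exp (- \<mu> * (norm (x::'a::euclidean_space))\<^sup>2)) \<partial>lborel) < \<infinity>"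
proof -
  have exp_norm: "exp (- \<mu> * (norm x)\<^sup>2) = (\<Prod>b\<in>Basis. exp (- \<mu> * (x \<bullet> b)\<^sup>2))" for x :: 'a
  proof -
    have "(norm x)\<^sup>2 = x \<bullet> x" by (rule power2_norm_eq_inner)
    also have "\<dots> = (\<Sum>b\<in>Basis. (x \<bullet> b)\<^sup>2)"
      by (simp add: euclidean_inner[of x x] power2_eq_square)
    finally show ?thesis by (simp add: exp_sum[symmetric] sum_distrib_left sum_negf)
  qed
  have "(\<integral>\<^sup>+x. (\<Prod>b\<in>(Basis::'a set). ennreal (exp (- \<mu> * (x \<bullet> b)\<^sup>2))) \<partial>lborel)
      = (\<Prod>b\<in>(Basis::'a set). (\<integral>\<^sup>+t. exp (- \<mu> * t\<^sup>2) \<partial>lborel))"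
    by (rule nn_integral_lborel_prod) auto
  then have "(\<integral>\<^sup>+x. ennreal (exp (- \<mu> * (norm (x::'a))\<^sup>2)) \<partial>lborel)
      = (\<Prod>b\<in>(Basis::'a set). (\<integral>\<^sup>+t. exp (- \<mu> * t\<^sup>2) \<partial>lborel))"
    unfolding exp_norm by (simp add: prod_ennreal)
  also have "\<dots> < \<infinity>"
    using nn_integral_exp_neg_square_finite[OF assms] by (simp add: power_less_top_ennreal)
  finally show ?thesis .
qed

section \<open>Hermitian forms\<close>

lemma qform_zero [simp]: "qform M 0 = 0"
  by (simp add: qform_def herm_def)

lemma herm_scaleR_right: "herm h (c *\<^sub>R v) = of_real c * herm h v"
  unfolding herm_def
  by (simp only: vector_scaleR_component) (simp add: sum_distrib_left scaleR_conv_of_real mult_ac)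

lemma herm_self: "herm h h = of_real ((norm h)\<^sup>2)"
proof -
  have "(norm h)\<^sup>2 = (\<Sum>i\<in>UNIV. (cmod (h$i))\<^sup>2)"
    by (simp add: norm_vec_def L2_set_def sum_nonneg)
  moreover have "cnj (h$i) * h$i = of_real ((cmod (h$i))\<^sup>2)" for i
    by (metis complex_norm_square mult.commute)
  ultimately show ?thesis unfolding herm_def by (simp only: of_real_sum)
qed

lemma norm_herm_sgn_self: "cmod (herm h (sgn h)) = norm h"
  by (cases "h = 0")
    (simp_all add: sgn_div_norm divide_inverse_commute herm_scaleR_right herm_self norm_mult
      norm_inverse power2_eq_square)

lemma norm_herm_le: "cmod (herm h u) \<le> norm h * norm u"
proof -
  have "cmod (herm h u) \<le> (\<Sum>i\<in>UNIV. \<bar>cmod (h$i)\<bar> * \<bar>cmod (u$i)\<bar>)"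
    unfolding herm_def by (rule order_trans[OF norm_sum]) (simp add: norm_mult)
  also have "\<dots> \<le> L2_set (\<lambda>i. cmod (h$i)) UNIV * L2_set (\<lambda>i. cmod (u$i)) UNIV"
    by (rule L2_set_mult_ineq)
  finally show ?thesis by (simp add: norm_vec_def)
qed

lemma continuous_on_herm: "continuous_on UNIV (\<lambda>x::(complex^'n)\<times>(complex^'n). herm (fst x) (snd x))"
  unfolding herm_def by (intro continuous_intros)

lemma continuous_on_qform: "continuous_on UNIV (\<lambda>h. Re (qform M h))"
  unfolding qform_def herm_def matrix_vector_mult_def by (intro continuous_intros)

lemma borel_measurable_herm [measurable (raw)]:
  "f \<in> borel_measurable M \<Longrightarrow> g \<in> borel_measurable M \<Longrightarrow> (\<lambda>x. herm (f x) (g x)) \<in> borel_measurable M"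
  by (rule borel_measurable_continuous_Pair[OF _ _ continuous_on_herm])

lemma borel_measurable_qform [measurable (raw)]:
  "f \<in> borel_measurable M \<Longrightarrow> (\<lambda>x. Re (qform R (f x))) \<in> borel_measurable M"
  using measurable_compose[OF _ borel_measurable_continuous_onI[OF continuous_on_qform]] by blast

lemma qform_scaleR: "qform M (c *\<^sub>R h) = of_real (c\<^sup>2) * qform M h"
proof -
  have mv: "M *v (c *\<^sub>R h) = c *\<^sub>R (M *v h)"
    unfolding vec_eq_iff matrix_vector_mult_def
    by (simp only: vec_lambda_beta vector_scaleR_component)
      (simp add: scaleR_conv_of_real sum_distrib_left mult.left_commute)
  have "qform M (c *\<^sub>R h) = (\<Sum>i\<in>UNIV. of_real (c\<^sup>2) * (cnj (h$i) * (M *v h)$i))"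
    unfolding qform_def herm_def mv
    by (intro sum.cong refl) (simp only: vector_scaleR_component, simp add: scaleR_conv_of_real power2_eq_square)
  then show ?thesis by (simp add: qform_def herm_def sum_distrib_left)
qed

lemma hermitian_herm_mult_left:
  fixes R :: "complex^'m^'m"
  assumes "hermitian R"
  shows "herm (R *v y) y = herm y (R *v y)"
proof -
  have R: "cnj (R$i$j) = R$j$i" for i j
    using assms unfolding hermitian_def by (metis complex_cnj_cnj)
  have "herm (R *v y) y = (\<Sum>i\<in>UNIV. \<Sum>j\<in>UNIV. R$j$i * cnj (y$j) * y$i)"
    by (simp add: herm_def matrix_vector_mult_def sum_distrib_right R)
  also have "\<dots> = (\<Sum>j\<in>UNIV. \<Sum>i\<in>UNIV. R$j$i * cnj (y$j) * y$i)"
    by (rule sum.swap)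
  also have "\<dots> = herm y (R *v y)"
    by (simp add: herm_def matrix_vector_mult_def sum_distrib_left mult_ac)
  finally show ?thesis .
qed

lemma herm_pos_def_qform_nonneg: "herm_pos_def R \<Longrightarrow> Re (qform R v) \<ge> 0"
  by (cases "v = 0") (auto simp: herm_pos_def_def intro: less_imp_le)

lemma herm_pos_def_qform_pos: "herm_pos_def R \<Longrightarrow> v \<noteq> 0 \<Longrightarrow> Re (qform R v) > 0"
  by (simp add: herm_pos_def_def)

lemma herm_pos_def_right_inverse:
  fixes R :: "complex^'m^'m"
  assumes "herm_pos_def R"
  shows "R ** matrix_inv R = mat 1"
proof -
  have "R *v x = 0 \<Longrightarrow> x = 0" for x
    using herm_pos_def_qform_pos[OF assms, of x] by (auto simp: qform_def herm_def)
  then have "invertible R"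
    by (simp add: matrix_left_invertible_ker invertible_left_inverse)
  then show ?thesis unfolding matrix_inv_def invertible_def by (rule someI_ex[THEN conjunct1])
qed

lemma herm_pos_def_qform_inverse_pos:
  fixes R :: "complex^'m^'m"
  assumes "herm_pos_def R" "h \<noteq> 0"
  shows "Re (qform (matrix_inv R) h) > 0"
proof -
  define y where "y = matrix_inv R *v h"
  have h: "h = R *v y"
    using herm_pos_def_right_inverse[OF assms(1)] by (simp add: y_def matrix_vector_mul_assoc)
  have "matrix_inv R *v h = y" by (simp add: y_def)
  then have "qform (matrix_inv R) h = herm (R *v y) y" by (simp add: qform_def h)
  also have "\<dots> = qform R y"
    using assms(1) by (simp add: herm_pos_def_def qform_def hermitian_herm_mult_left)
  finally have "qform (matrix_inv R) h = qform R y" .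
  moreover have "y \<noteq> 0" using assms(2) h by auto
  ultimately show ?thesis using assms(1) by (simp add: herm_pos_def_qform_pos)
qed

text \<open>Compactness of the unit sphere makes a positive form coercive.\<close>
lemma qform_coercive:
  fixes M :: "complex^'m^'m"
  assumes pos: "\<And>h. h \<noteq> 0 \<Longrightarrow> Re (qform M h) > 0"
  obtains l where "l > 0" "\<And>h. Re (qform M h) \<ge> l * (norm h)\<^sup>2"
proof -
  have "compact (sphere (0::complex^'m) 1)" "sphere (0::complex^'m) 1 \<noteq> {}"
    by simp_all
  moreover have "continuous_on (sphere 0 1) (\<lambda>h. Re (qform M h))"
    using continuous_on_qform continuous_on_subset by blast
  ultimately obtain x where x: "x \<in> sphere (0::complex^'m) 1"
    and min: "\<forall>y\<in>sphere 0 1. Re (qform M x) \<le> Re (qform M y)"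
    using continuous_attains_inf by blast
  have "Re (qform M h) \<ge> Re (qform M x) * (norm h)\<^sup>2" for h
  proof (cases "h = 0")
    case False
    define u where "u = sgn h"
    have "h = norm h *\<^sub>R u" using False by (simp add: u_def sgn_div_norm)
    then have "Re (qform M h) = (norm h)\<^sup>2 * Re (qform M (sgn h))"
      unfolding u_def by (subst (1) \<open>h = norm h *\<^sub>R u\<close>, simp only: qform_scaleR) (simp add: u_def)
    moreover have "Re (qform M x) \<le> Re (qform M (sgn h))" using False min by (simp add: norm_sgn)
    ultimately show ?thesis by (simp add: mult.commute mult_right_mono)
  qed simp
  moreover have "Re (qform M x) > 0" using x by (intro pos) auto
  ultimately show thesis using that by blast
qed

section \<open>The complex Gaussian measure\<close>

lemma borel_measurable_CN_density:
  "(\<lambda>h. ennreal (exp (- Re (qform (matrix_inv R) h)) / D)) \<in> borel_measurable borel"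
  by measurable

lemma sets_CN [measurable_cong]: "sets (CN R) = sets borel"
  by (simp add: CN_def)

lemma space_CN [simp]: "space (CN R) = UNIV"
  by (simp add: CN_def)

lemma sigma_finite_CN: "sigma_finite_measure (CN R)"
  unfolding CN_def
  by (subst sigma_finite_measure.sigma_finite_iff_density_finite[OF sigma_finite_lborel])
    (auto intro: borel_measurable_CN_density)

lemma pair_sigma_finite_CN: "pair_sigma_finite (CN R1) (CN R2)"
  by (intro pair_sigma_finite.intro sigma_finite_CN)

lemma AE_CN_nonzero: "AE h in CN R. h \<noteq> 0"
proof -
  have "AE h in (lborel::(complex^'a) measure). h \<noteq> 0"
    by (rule AE_I[of _ _ "{0}"]) (auto simp: emeasure_lborel_countable)
  then show ?thesis unfolding CN_def
    by (subst AE_density) (auto intro: borel_measurable_CN_density)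
qed

text \<open>The density is dominated by \<open>exp (- l \<parallel>h\<parallel>\<^sup>2)\<close>; half of the exponent absorbs the
  quadratic factor.\<close>
lemma nn_integral_CN_quadratic_finite:
  fixes R :: "complex^'m^'m"
  assumes R: "herm_pos_def R" and "a \<ge> 0" "b \<ge> 0"
  shows "(\<integral>\<^sup>+h. ennreal (a + b * (norm h)\<^sup>2) \<partial>CN R) < \<infinity>"
proof -
  obtain l where l: "l > 0" and lq: "\<And>h. Re (qform (matrix_inv R) h) \<ge> l * (norm h)\<^sup>2"
    using qform_coercive herm_pos_def_qform_inverse_pos[OF R] by metis
  define D where "D = pi ^ CARD('m) * Re (det R)"
  define K where "K = \<bar>1 / D\<bar> * (a + 2 * b / l)"
  have K: "K \<ge> 0" using assms l by (simp add: K_def)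
  have bound: "exp (- Re (qform (matrix_inv R) h)) / D * (a + b * s) \<le> K * exp (- (l/2) * s)"
    if D: "D > 0" and s: "s = (norm h)\<^sup>2" for h :: "complex^'m" and s
  proof -
    have s0: "s \<ge> 0" by (simp add: s)
    have "exp (- Re (qform (matrix_inv R) h)) / D \<le> \<bar>1/D\<bar> * exp (- l * s)"
      using lq[of h] D by (simp add: s divide_right_mono)
    moreover have "a + b * s \<le> (a + 2 * b / l) * exp (l * s / 2)"
    proof -
      have "1 + l * s / 2 \<le> exp (l * s / 2)" by (rule exp_ge_add_one_self)
      then have "b * s \<le> (2 * b / l) * exp (l * s / 2)"
        using l assms s0 by (simp add: field_simps) (smt (verit) mult_left_mono)
      moreover have "a \<le> a * exp (l * s / 2)"
        using assms l s0 mult_left_mono[of 1 "exp (l * s / 2)" a] by simp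
      ultimately show ?thesis by (simp add: algebra_simps)
    qed
    ultimately have "exp (- Re (qform (matrix_inv R) h)) / D * (a + b * s)
        \<le> (\<bar>1/D\<bar> * exp (- l * s)) * ((a + 2 * b / l) * exp (l * s / 2))"
      using assms s0 D by (intro mult_mono) auto
    also have "\<dots> = K * exp (- (l/2) * s)"
      by (simp add: K_def algebra_simps flip: exp_add)
    finally show ?thesis .
  qed
  have pointwise: "ennreal (exp (- Re (qform (matrix_inv R) h)) / D) * ennreal (a + b * (norm h)\<^sup>2)
      \<le> ennreal (K * exp (- (l/2) * (norm h)\<^sup>2))" for h :: "complex^'m"
  proof (cases "D > 0")
    case True
    then show ?thesis
      using bound[OF True refl] assms True by (subst ennreal_mult[symmetric]) (auto intro!: ennreal_leI)
  next
    case False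
    then have "exp (- Re (qform (matrix_inv R) h)) / D \<le> 0"
      by (intro divide_nonneg_nonpos) auto
    then show ?thesis by (simp add: ennreal_neg)
  qed
  have "(\<integral>\<^sup>+h. ennreal (a + b * (norm h)\<^sup>2) \<partial>CN R)
     = (\<integral>\<^sup>+h. ennreal (exp (- Re (qform (matrix_inv R) h)) / D) * ennreal (a + b * (norm h)\<^sup>2) \<partial>lborel)"
    unfolding CN_def D_def by (rule nn_integral_density) (use borel_measurable_CN_density in auto)
  also have "\<dots> \<le> (\<integral>\<^sup>+h. ennreal (K * exp (- (l/2) * (norm (h::complex^'m))\<^sup>2)) \<partial>lborel)"
    using pointwise by (intro nn_integral_mono) blast
  also have "\<dots> = K * (\<integral>\<^sup>+h. ennreal (exp (- (l/2) * (norm (h::complex^'m))\<^sup>2)) \<partial>lborel)"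
    using K by (simp add: ennreal_mult nn_integral_cmult)
  also have "\<dots> < \<infinity>"
    using nn_integral_exp_neg_norm_square_finite[of "l/2", where 'a="complex^'m"] l
    by (simp add: ennreal_mult_less_top)
  finally show ?thesis .
qed

lemma emeasure_CN_finite: "herm_pos_def R \<Longrightarrow> emeasure (CN R) UNIV < \<infinity>"
  using nn_integral_CN_quadratic_finite[of R 1 0] by simp

lemma (in pair_sigma_finite) AE_pair_fstI:
  assumes [measurable]: "Measurable.pred M1 P" and "AE x in M1. P x"
  shows "AE z in M1 \<Otimes>\<^sub>M M2. P (fst z)"
  by (rule AE_pair_measure) (use assms(2) in \<open>auto elim!: AE_mp\<close>)

lemma (in pair_sigma_finite) AE_pair_sndI:
  assumes [measurable]: "Measurable.pred M2 P" and "AE y in M2. P y"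
  shows "AE z in M1 \<Otimes>\<^sub>M M2. P (snd z)"
  by (rule AE_pair_measure) (use assms(2) in auto)

section \<open>The rate function\<close>

lemma borel_measurable_rate [measurable (raw)]:
  assumes [measurable]: "f \<in> borel_measurable M" "g \<in> borel_measurable M" "w \<in> borel_measurable M"
  shows "(\<lambda>x. rate N0 P (f x) (g x) Pb Rc (w x)) \<in> borel_measurable M"
  unfolding rate_def by measurable

lemma rate_zero_power [simp]: "rate N0 0 h u Pb Rc v = 0"
  by (simp add: rate_def)

lemma rate_mono:
  assumes "N0 > 0" "herm_pos_def Rc" "0 \<le> P" "P \<le> P'" "0 \<le> Pb'" "Pb' \<le> Pb"
  shows "rate N0 P h u Pb Rc v \<le> rate N0 P' h u Pb' Rc v"
proof -
  have q: "Re (qform Rc v) \<ge> 0" using assms(2) by (rule herm_pos_def_qform_nonneg)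
  have "N0 + Pb' * Re (qform Rc v) \<le> N0 + Pb * Re (qform Rc v)"
    using assms q by (simp add: mult_right_mono)
  moreover have "0 < N0 + Pb' * Re (qform Rc v)"
    using assms q by (simp add: add_pos_nonneg)
  moreover have "P * (cmod (herm h u))\<^sup>2 \<le> P' * (cmod (herm h u))\<^sup>2"
    using assms by (simp add: mult_right_mono)
  ultimately have "P * (cmod (herm h u))\<^sup>2 / (N0 + Pb * Re (qform Rc v))
      \<le> P' * (cmod (herm h u))\<^sup>2 / (N0 + Pb' * Re (qform Rc v))"
    using assms by (intro frac_le) auto
  moreover have "0 \<le> P * (cmod (herm h u))\<^sup>2 / (N0 + Pb * Re (qform Rc v))"
    using assms q by simp
  ultimately show ?thesis unfolding rate_def by simp
qed

lemma rate_no_interference [simp]: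
  "rate N0 P h u 0 Rc v = log 2 (1 + P * (cmod (herm h u))\<^sup>2 / N0)"
  by (simp add: rate_def)

lemma rate_nonneg:
  assumes "N0 > 0" "herm_pos_def Rc" "0 \<le> P" "0 \<le> Pb"
  shows "0 \<le> rate N0 P h u Pb Rc v"
  using rate_mono[OF assms(1,2) order_refl assms(3) assms(4) order_refl] by simp

lemma rate_pos:
  assumes "N0 > 0" "herm_pos_def Rc" "0 < P" "herm h u \<noteq> 0" "0 \<le> Pb"
  shows "0 < rate N0 P h u Pb Rc v"
proof -
  have "0 \<le> Re (qform Rc v)" using assms(2) by (rule herm_pos_def_qform_nonneg)
  then have "0 < P * (cmod (herm h u))\<^sup>2 / (N0 + Pb * Re (qform Rc v))"
    using assms by (simp add: add_pos_nonneg)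
  then show ?thesis unfolding rate_def by simp
qed

lemma rate_strict_antimono_interference:
  assumes "N0 > 0" "herm_pos_def Rc" "v \<noteq> 0" "0 \<le> P" "0 \<le> Pb'" "Pb' < Pb"
    and "rate N0 P h u Pb Rc v \<noteq> 0"
  shows "rate N0 P h u Pb Rc v < rate N0 P h u Pb' Rc v"
proof -
  define a where "a = P * (cmod (herm h u))\<^sup>2"
  have "a \<noteq> 0" using assms(7) by (auto simp: rate_def a_def)
  then have a: "a > 0" using assms(4) by (simp add: a_def)
  have q: "Re (qform Rc v) > 0" using assms(2,3) by (rule herm_pos_def_qform_pos)
  have d: "0 < N0 + Pb' * Re (qform Rc v)" using assms q by (simp add: add_pos_nonneg)
  have less: "N0 + Pb' * Re (qform Rc v) < N0 + Pb * Re (qform Rc v)"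
    using q assms(6) by (simp add: mult_strict_right_mono)
  then have "a / (N0 + Pb * Re (qform Rc v)) < a / (N0 + Pb' * Re (qform Rc v))"
    using a d by (intro divide_strict_left_mono) auto
  moreover have "0 \<le> a / (N0 + Pb * Re (qform Rc v))"
    using a d less by (intro divide_nonneg_pos) auto
  ultimately show ?thesis unfolding rate_def a_def[symmetric] by simp
qed

lemma rate_le_quadratic:
  assumes "N0 > 0" "herm_pos_def Rc" "0 \<le> P" "0 \<le> Pb" "norm u = 1"
  shows "rate N0 P h u Pb Rc v \<le> 2 * P / N0 * (norm h)\<^sup>2"
proof -
  define x where "x = P * (cmod (herm h u))\<^sup>2 / (N0 + Pb * Re (qform Rc v))"
  have q: "Re (qform Rc v) \<ge> 0" using assms(2) by (rule herm_pos_def_qform_nonneg)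
  have x0: "0 \<le> x" unfolding x_def using assms q by simp
  have "(cmod (herm h u))\<^sup>2 \<le> (norm h)\<^sup>2"
    using norm_herm_le[of h u] assms(5) by (simp add: power_mono)
  then have x_le: "x \<le> P * (norm h)\<^sup>2 / N0"
    unfolding x_def using assms q by (intro frac_le mult_left_mono) auto
  have "log 2 (1 + x) \<le> 2 * x"
  proof -
    have "ln (1 + x) \<le> x" using x0 by (rule ln_add_one_self_le_self)
    moreover have "x \<le> 2 * x * ln 2"
      using x0 ln2_ge_two_thirds mult_left_mono[of 1 "2 * ln 2" x] by simp
    ultimately show ?thesis by (simp add: log_def divide_le_eq)
  qed
  then show ?thesis using x_le unfolding rate_def x_def[symmetric] by simp
qed

lemma tendsto_rate:
  assumes "(Pn \<longlongrightarrow> P) F" "(Pbn \<longlongrightarrow> Pb) F"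
    and "N0 > 0" "herm_pos_def Rc" "0 \<le> P" "0 \<le> Pb"
  shows "((\<lambda>n. rate N0 (Pn n) h u (Pbn n) Rc v) \<longlongrightarrow> rate N0 P h u Pb Rc v) F"
proof -
  have q: "Re (qform Rc v) \<ge> 0" using assms(4) by (rule herm_pos_def_qform_nonneg)
  then have d: "0 < N0 + Pb * Re (qform Rc v)" using assms by (simp add: add_pos_nonneg)
  have "0 \<le> P * (cmod (herm h u))\<^sup>2 / (N0 + Pb * Re (qform Rc v))"
    using assms d by simp
  then show ?thesis unfolding rate_def
    using d by (intro tendsto_intros assms(1,2)) auto
qed

section \<open>Expected rates\<close>

lemma nn_integral_exceeds_along_incseq:
  fixes g :: "nat \<Rightarrow> 'a \<Rightarrow> real"
  assumes meas: "\<And>n. (\<lambda>x. ennreal (g n x)) \<in> borel_measurable M"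
    and inc: "\<And>x n. g n x \<le> g (Suc n) x"
    and lim: "\<And>x. (\<lambda>n. g n x) \<longlonglongrightarrow> g' x"
    and exceeds: "c < (\<integral>\<^sup>+x. ennreal (g' x) \<partial>M)"
  obtains n where "c < (\<integral>\<^sup>+x. ennreal (g n x) \<partial>M)"
proof -
  have incx: "incseq (\<lambda>n. ennreal (g n x))" for x
    using inc by (intro incseq_SucI) (simp add: ennreal_leI)
  have "ennreal (g' x) = (SUP n. ennreal (g n x))" for x
    using LIMSEQ_SUP[OF incx[of x]] lim[of x] by (intro LIMSEQ_unique) auto
  then have "(\<integral>\<^sup>+x. ennreal (g' x) \<partial>M) = (SUP n. (\<integral>\<^sup>+x. ennreal (g n x) \<partial>M))"
    by (simp only:) (rule nn_integral_monotone_convergence_SUP,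
        auto simp: incseq_def le_fun_def meas dest: incx[THEN incseqD])
  then show ?thesis using exceeds that by (auto simp: less_SUP_iff)
qed

lemma ER1_zero_power: "ER1 N0 R11 R22 R12 0 u1 P2 u2 = 0"
  by (simp add: ER1_def)

context
  fixes N0 :: real and R11 :: "complex^'m1^'m1" and R22 :: "complex^'m2^'m2"
  assumes N0: "N0 > 0"
begin

lemma ER1_le_interference_free:
  assumes "herm_pos_def R12" "0 \<le> P1" "0 \<le> P2"
  shows "ER1 N0 R11 R22 R12 P1 u1 P2 u2 \<le> ER1 N0 R11 R22 R12 P1 u1 0 v"
  unfolding ER1_def
  using rate_mono[OF N0 assms(1,2) order_refl order_refl assms(3)]
  by (intro nn_integral_mono ennreal_leI) simp

lemma ER1_exceeds_at_lower_power:
  assumes R12: "herm_pos_def R12" and P1: "0 < P1" and P2: "0 \<le> P2"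
    and [measurable]: "u1 \<in> borel_measurable borel" "u2 \<in> borel_measurable borel"
    and exceeds: "c < ER1 N0 R11 R22 R12 P1 u1 P2 u2"
  obtains P1' where "0 \<le> P1'" "P1' < P1" "c < ER1 N0 R11 R22 R12 P1' u1 P2 u2"
proof -
  define P1n where "P1n n = P1 - P1 / real (Suc (Suc n))" for n
  have P1n_nonneg: "0 \<le> P1n n" and P1n_less: "P1n n < P1" for n
    using P1 by (simp_all add: P1n_def divide_le_eq)
  have P1n_inc: "P1n n \<le> P1n (Suc n)" for n
    using P1 by (simp add: P1n_def divide_left_mono)
  have "P1n \<longlonglongrightarrow> P1 - 0"
    unfolding P1n_def by (intro tendsto_intros LIMSEQ_Suc lim_const_over_n)
  then have P1n_lim: "P1n \<longlonglongrightarrow> P1" by simp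
  obtain n where "c < ER1 N0 R11 R22 R12 (P1n n) u1 P2 u2"
    unfolding ER1_def
  proof (rule nn_integral_exceeds_along_incseq
      [where g = "\<lambda>n z. rate N0 (P1n n) (fst z) (u1 (fst z)) P2 R12 (u2 (snd z))"])
    show "rate N0 (P1n n) (fst z) (u1 (fst z)) P2 R12 (u2 (snd z))
        \<le> rate N0 (P1n (Suc n)) (fst z) (u1 (fst z)) P2 R12 (u2 (snd z))" for n z
      by (rule rate_mono[OF N0 R12 P1n_nonneg P1n_inc P2 order_refl])
    show "(\<lambda>n. rate N0 (P1n n) (fst z) (u1 (fst z)) P2 R12 (u2 (snd z)))
        \<longlonglongrightarrow> rate N0 P1 (fst z) (u1 (fst z)) P2 R12 (u2 (snd z))" for z
      using P1 P2 by (intro tendsto_rate[OF P1n_lim tendsto_const N0 R12]) auto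
  qed (use exceeds in \<open>auto simp: ER1_def\<close>)
  then show thesis using that P1n_nonneg P1n_less by blast
qed

lemma ER1_exceeds_at_small_interference:
  assumes R12: "herm_pos_def R12" and P1: "0 \<le> P1" and Pmax: "0 < Pmax"
    and [measurable]: "u1 \<in> borel_measurable borel" "u2 \<in> borel_measurable borel"
    and exceeds: "c < ER1 N0 R11 R22 R12 P1 u1 0 u2"
  obtains P2 where "0 < P2" "P2 \<le> Pmax" "c < ER1 N0 R11 R22 R12 P1 u1 P2 u2"
proof -
  define P2n where "P2n n = Pmax / real (Suc (Suc n))" for n
  have P2n_pos: "0 < P2n n" and P2n_le: "P2n n \<le> Pmax" for n
    using Pmax by (simp_all add: P2n_def divide_le_eq)
  have P2n_dec: "P2n (Suc n) \<le> P2n n" for n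
    using Pmax by (simp add: P2n_def divide_left_mono)
  have P2n_lim: "P2n \<longlonglongrightarrow> 0"
    unfolding P2n_def by (intro LIMSEQ_Suc lim_const_over_n)
  obtain n where "c < ER1 N0 R11 R22 R12 P1 u1 (P2n n) u2"
    unfolding ER1_def
  proof (rule nn_integral_exceeds_along_incseq
      [where g = "\<lambda>n z. rate N0 P1 (fst z) (u1 (fst z)) (P2n n) R12 (u2 (snd z))"])
    show "rate N0 P1 (fst z) (u1 (fst z)) (P2n n) R12 (u2 (snd z))
        \<le> rate N0 P1 (fst z) (u1 (fst z)) (P2n (Suc n)) R12 (u2 (snd z))" for n z
      by (rule rate_mono[OF N0 R12 P1 order_refl less_imp_le[OF P2n_pos] P2n_dec])
    show "(\<lambda>n. rate N0 P1 (fst z) (u1 (fst z)) (P2n n) R12 (u2 (snd z)))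
        \<longlonglongrightarrow> rate N0 P1 (fst z) (u1 (fst z)) 0 R12 (u2 (snd z))" for z
      using P1 by (intro tendsto_rate[OF tendsto_const P2n_lim N0 R12]) auto
  qed (use exceeds in \<open>auto simp: ER1_def\<close>)
  then show thesis using that P2n_pos P2n_le by blast
qed

lemma ER2_finite:
  fixes R21 :: "complex^'m1^'m1"
  assumes R11: "herm_pos_def R11" and R22: "herm_pos_def R22" and R21: "herm_pos_def R21"
    and P1: "0 \<le> P1" and P2: "0 \<le> P2"
    and [measurable]: "u1 \<in> borel_measurable borel" "u2 \<in> borel_measurable borel"
    and u2: "AE h in CN R22. norm (u2 h) = 1"
  shows "ER2 N0 R11 R22 R21 P1 u1 P2 u2 < \<infinity>"
proof -
  interpret pair_sigma_finite "CN R11" "CN R22" by (rule pair_sigma_finite_CN)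
  define C where "C = 2 * P2 / N0"
  have "AE z in CN R11 \<Otimes>\<^sub>M CN R22. norm (u2 (snd z)) = 1"
    using u2 by (intro AE_pair_sndI) auto
  then have "AE z in CN R11 \<Otimes>\<^sub>M CN R22.
      ennreal (rate N0 P2 (snd z) (u2 (snd z)) P1 R21 (u1 (fst z))) \<le> ennreal (C * (norm (snd z))\<^sup>2)"
    by eventually_elim
      (rule ennreal_leI, rule order_trans[OF rate_le_quadratic[OF N0 R21 P2 P1]], auto simp: C_def)
  then have "ER2 N0 R11 R22 R21 P1 u1 P2 u2 \<le> (\<integral>\<^sup>+z. ennreal (C * (norm (snd z))\<^sup>2) \<partial>(CN R11 \<Otimes>\<^sub>M CN R22))"
    unfolding ER2_def by (rule nn_integral_mono_AE)
  also have "\<dots> = (\<integral>\<^sup>+y. ennreal (C * (norm y)\<^sup>2) \<partial>CN R22) * emeasure (CN R11) UNIV"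
    by (subst M2.nn_integral_fst[symmetric]) auto
  also have "\<dots> < \<infinity>"
    using nn_integral_CN_quadratic_finite[OF R22, of 0 C] emeasure_CN_finite[OF R11] P2 N0
    by (simp add: C_def ennreal_mult_less_top)
  finally show ?thesis .
qed

lemma ER2_strict_antimono_interference:
  fixes R21 :: "complex^'m1^'m1"
  assumes R11: "herm_pos_def R11" and R22: "herm_pos_def R22" and R21: "herm_pos_def R21"
    and P1': "0 \<le> P1'" "P1' < P1" and P2: "0 \<le> P2"
    and meas [measurable]: "u1 \<in> borel_measurable borel" "u2 \<in> borel_measurable borel"
    and u1: "AE h in CN R11. norm (u1 h) = 1" and u2: "AE h in CN R22. norm (u2 h) = 1"
    and nonzero: "ER2 N0 R11 R22 R21 P1 u1 P2 u2 \<noteq> 0"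
  shows "ER2 N0 R11 R22 R21 P1 u1 P2 u2 < ER2 N0 R11 R22 R21 P1' u1 P2 u2"
  unfolding ER2_def
proof (rule nn_integral_less)
  interpret pair_sigma_finite "CN R11" "CN R22" by (rule pair_sigma_finite_CN)
  let ?r = "\<lambda>P1 z. rate N0 P2 (snd z) (u2 (snd z)) P1 R21 (u1 (fst z))"
  show "(\<integral>\<^sup>+z. ennreal (?r P1 z) \<partial>(CN R11 \<Otimes>\<^sub>M CN R22)) \<noteq> \<infinity>"
    using ER2_finite[OF R11 R22 R21 _ P2 meas u2, of P1] P1' unfolding ER2_def by simp
  show "AE z in CN R11 \<Otimes>\<^sub>M CN R22. ennreal (?r P1 z) \<le> ennreal (?r P1' z)"
    using P1' by (intro AE_I2 ennreal_leI rate_mono[OF N0 R21 P2]) auto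
  show "\<not> (AE z in CN R11 \<Otimes>\<^sub>M CN R22. ennreal (?r P1' z) \<le> ennreal (?r P1 z))"
  proof
    assume "AE z in CN R11 \<Otimes>\<^sub>M CN R22. ennreal (?r P1' z) \<le> ennreal (?r P1 z)"
    moreover have "AE z in CN R11 \<Otimes>\<^sub>M CN R22. u1 (fst z) \<noteq> 0"
      using u1 by (intro AE_pair_fstI) (auto elim!: AE_mp)
    ultimately have "AE z in CN R11 \<Otimes>\<^sub>M CN R22. ennreal (?r P1 z) = 0"
    proof eventually_elim
      case (elim z)
      show ?case
      proof (rule ccontr)
        assume "ennreal (?r P1 z) \<noteq> 0"
        then have "?r P1 z < ?r P1' z"
          using elim(2) by (intro rate_strict_antimono_interference[OF N0 R21 _ P2 P1']) auto
        then have "ennreal (?r P1 z) < ennreal (?r P1' z)"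
          using rate_nonneg[OF N0 R21 P2, of P1 "snd z" "u2 (snd z)" "u1 (fst z)"] P1'
          by (intro ennreal_lessI) auto
        then show False using elim(1) by simp
      qed
    qed
    then show False
      using nonzero unfolding ER2_def by (subst (asm) nn_integral_0_iff_AE[symmetric]) auto
  qed
qed (measurable)

lemma ER2_matched_filter_eq_0_imp_null:
  fixes R21 :: "complex^'m1^'m1"
  assumes R21: "herm_pos_def R21" and P1: "0 \<le> P1" and P2: "0 < P2"
    and [measurable]: "u1 \<in> borel_measurable borel"
    and "ER2 N0 R11 R22 R21 P1 u1 P2 sgn = 0"
  shows "AE z in CN R11 \<Otimes>\<^sub>M CN R22. False"
proof -
  interpret pair_sigma_finite "CN R11" "CN R22" by (rule pair_sigma_finite_CN)
  have "AE z in CN R11 \<Otimes>\<^sub>M CN R22. ennreal (rate N0 P2 (snd z) (sgn (snd z)) P1 R21 (u1 (fst z))) = 0"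
    using assms(5) unfolding ER2_def by (subst (asm) nn_integral_0_iff_AE) auto
  moreover have "AE z in CN R11 \<Otimes>\<^sub>M CN R22. snd z \<noteq> 0"
    by (intro AE_pair_sndI AE_CN_nonzero) auto
  ultimately show "AE z in CN R11 \<Otimes>\<^sub>M CN R22. False"
  proof eventually_elim
    case (elim z)
    have "herm (snd z) (sgn (snd z)) \<noteq> 0"
      using norm_herm_sgn_self[of "snd z"] elim(2) by auto
    then have "0 < rate N0 P2 (snd z) (sgn (snd z)) P1 R21 (u1 (fst z))"
      by (rule rate_pos[OF N0 R21 P2 _ P1])
    then show False using elim(1) by simp
  qed
qed

end

section \<open>Slack in the incumbent constraint is never optimal\<close>

lemma feasible_P2_improve_by_lower_power:
  assumes R: "herm_pos_def R11" "herm_pos_def R12" "herm_pos_def R21" "herm_pos_def R22"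
    and N0: "N0 > 0"
    and feasible: "feasible_P2 N0 R11 R22 R12 P1max P2max \<tau>1 P1 u1 P2 u2"
    and slack: "ennreal \<tau>1 < ER1 N0 R11 R22 R12 P1 u1 P2 u2"
    and nonzero: "ER2 N0 R11 R22 R21 P1 u1 P2 u2 \<noteq> 0"
  obtains P1' where "feasible_P2 N0 R11 R22 R12 P1max P2max \<tau>1 P1' u1 P2 u2"
    "ER2 N0 R11 R22 R21 P1 u1 P2 u2 < ER2 N0 R11 R22 R21 P1' u1 P2 u2"
proof -
  have P: "0 \<le> P1" "P1 \<le> P1max" "0 \<le> P2" "P2 \<le> P2max"
    and meas [measurable]: "u1 \<in> borel_measurable borel" "u2 \<in> borel_measurable borel"
    and u: "AE h in CN R11. norm (u1 h) = 1" "AE h in CN R22. norm (u2 h) = 1"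
    using feasible unfolding feasible_P2_def by auto
  have "P1 \<noteq> 0"
  proof
    assume "P1 = 0"
    then show False using slack by (simp add: ER1_zero_power)
  qed
  then obtain P1' where P1': "0 \<le> P1'" "P1' < P1" and "ennreal \<tau>1 < ER1 N0 R11 R22 R12 P1' u1 P2 u2"
    using ER1_exceeds_at_lower_power[OF N0 R(2) _ P(3) meas slack] P by force
  then have "feasible_P2 N0 R11 R22 R12 P1max P2max \<tau>1 P1' u1 P2 u2"
    using P u by (auto simp: feasible_P2_def)
  moreover have "ER2 N0 R11 R22 R21 P1 u1 P2 u2 < ER2 N0 R11 R22 R21 P1' u1 P2 u2"
    by (rule ER2_strict_antimono_interference[OF N0 R(1,4,3) P1' P(3) meas u nonzero])
  ultimately show thesis by (rule that)
qed

lemma feasible_P2_improve_by_matched_filter: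
  assumes R12: "herm_pos_def R12" and R21: "herm_pos_def R21"
    and N0: "N0 > 0" and P2max: "P2max > 0"
    and feasible: "feasible_P2 N0 R11 R22 R12 P1max P2max \<tau>1 P1 u1 P2 u2"
    and slack: "ennreal \<tau>1 < ER1 N0 R11 R22 R12 P1 u1 P2 u2"
    and zero: "ER2 N0 R11 R22 R21 P1 u1 P2 u2 = 0"
  obtains P2' where "feasible_P2 N0 R11 R22 R12 P1max P2max \<tau>1 P1 u1 P2' sgn"
    "ER2 N0 R11 R22 R21 P1 u1 P2 u2 < ER2 N0 R11 R22 R21 P1 u1 P2' sgn"
proof -
  have P: "0 \<le> P1" "P1 \<le> P1max" "0 \<le> P2"
    and meas [measurable]: "u1 \<in> borel_measurable borel" "u2 \<in> borel_measurable borel"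
    and u1: "AE h in CN R11. norm (u1 h) = 1"
    using feasible unfolding feasible_P2_def by auto
  have "ennreal \<tau>1 < ER1 N0 R11 R22 R12 P1 u1 0 sgn"
    using slack ER1_le_interference_free[OF N0 R12 P(1,3)] by (rule less_le_trans)
  then obtain P2' where P2': "0 < P2'" "P2' \<le> P2max"
    and "ennreal \<tau>1 < ER1 N0 R11 R22 R12 P1 u1 P2' sgn"
    by (rule ER1_exceeds_at_small_interference[OF N0 R12 P(1) P2max meas(1) borel_measurable_sgn])
  moreover have "AE h in CN R22. norm (sgn h) = 1"
    using AE_CN_nonzero by eventually_elim (simp add: norm_sgn)
  ultimately have "feasible_P2 N0 R11 R22 R12 P1max P2max \<tau>1 P1 u1 P2' sgn"
    using P u1 by (auto simp: feasible_P2_def)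
  moreover have "ER2 N0 R11 R22 R21 P1 u1 P2' sgn \<noteq> 0"
  proof
    assume "ER2 N0 R11 R22 R21 P1 u1 P2' sgn = 0"
    then have "AE z in CN R11 \<Otimes>\<^sub>M CN R22. False"
      by (rule ER2_matched_filter_eq_0_imp_null[OF N0 R21 P(1) P2'(1) meas(1)])
    then have "ER1 N0 R11 R22 R12 P1 u1 P2 u2 = 0"
      unfolding ER1_def by (subst nn_integral_0_iff_AE) (auto elim: AE_mp)
    then show False using slack by simp
  qed
  ultimately show thesis using zero that by (simp add: zero_less_iff_neq_zero)
qed

theorem proposition1:
  fixes R11 R21 :: "complex^'m1^'m1" and R22 R12 :: "complex^'m2^'m2"
    and N0 P1max P2max \<tau>1 :: real
    and P1 P2 :: real and u1 :: "complex^'m1 \<Rightarrow> complex^'m1" and u2 :: "complex^'m2 \<Rightarrow> complex^'m2"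
  assumes "herm_pos_def R11" "herm_pos_def R12" "herm_pos_def R21" "herm_pos_def R22"
    and "N0 > 0" "P1max > 0" "P2max > 0" "\<tau>1 > 0"
    and "(\<integral>\<^sup>+ h. ennreal (log 2 (1 + P1max * (norm h)\<^sup>2 / N0)) \<partial>CN R11) \<ge> ennreal \<tau>1"
    and "optimal_P2 N0 R11 R22 R12 R21 P1max P2max \<tau>1 P1 u1 P2 u2"
  shows "ER1 N0 R11 R22 R12 P1 u1 P2 u2 = ennreal \<tau>1"
proof (rule ccontr)
  have feasible: "feasible_P2 N0 R11 R22 R12 P1max P2max \<tau>1 P1 u1 P2 u2"
    and optimal: "\<And>P1' u1' P2' u2'. feasible_P2 N0 R11 R22 R12 P1max P2max \<tau>1 P1' u1' P2' u2' \<Longrightarrow>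
        \<not> ER2 N0 R11 R22 R21 P1 u1 P2 u2 < ER2 N0 R11 R22 R21 P1' u1' P2' u2'"
    using assms(10) unfolding optimal_P2_def by (auto simp: not_less)
  assume "ER1 N0 R11 R22 R12 P1 u1 P2 u2 \<noteq> ennreal \<tau>1"
  then have slack: "ennreal \<tau>1 < ER1 N0 R11 R22 R12 P1 u1 P2 u2"
    using feasible unfolding feasible_P2_def by auto
  show False
  proof (cases "ER2 N0 R11 R22 R21 P1 u1 P2 u2 = 0")
    case True
    with feasible_P2_improve_by_matched_filter[OF assms(2,3,5,7) feasible slack] optimal
    show False by metis
  next
    case False
    with feasible_P2_improve_by_lower_power[OF assms(1-5) feasible slack] optimal
    show False by metis
  qed
qed

end
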